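(* Let $0<\alpha\le\beta<\infty$ and $M,\tilde M>0$ with $M/(2^{4\beta+1}\tilde M)\ge1$, and let $\rho=[M/(2^{2\beta+1}\tilde M)]^{1/\beta}$. Let $\zeta\in(0,1]$, let $\mathbf{c}_0$ be such that $\{\mathbf{x}:\|\mathbf{x}-\mathbf{c}_0\|_\infty\le\rho\zeta^{\alpha/\beta}\}\subset[0,1]^d$, and let $\mathbf{c}$ satisfy $\|\mathbf{c}-\mathbf{c}_0\|_\infty\le\rho\zeta^{\alpha/\beta}-\zeta$. Define $y:[0,1]^d\to\mathbb{R}$ by $y(\mathbf{x})=\frac M2\zeta^\alpha-\frac M2\|\mathbf{x}-\mathbf{c}\|_\infty^\alpha$ if $\|\mathbf{x}-\mathbf{c}\|_\infty\le\zeta$; $y(\mathbf{x})=0$ if $\|\mathbf{x}-\mathbf{c}\|_\infty>\zeta$ and $\|\mathbf{x}-\mathbf{c}_0\|_\infty\le\rho\zeta^{\alpha/\beta}$; $y(\mathbf{x})=2^\beta\tilde M\rho^\beta\zeta^\alpha-2^\beta\tilde M\|\mathbf{x}-\mathbf{c}_0\|_\infty^\beta$ if $\|\mathbf{x}-\mathbf{c}\|_\infty>\zeta$ and $\|\mathbf{x}-\mathbf{c}_0\|_\infty>\rho\zeta^{\alpha/\beta}$. Then $y$ has unique maximizer $\mathbf{x}^*=\mathbf{c}$ on $[0,1]^d$ and $\tilde M\|\mathbf{x}^*-\mathbf{x}\|_\infty^\beta\le|y(\mathbf{x}^* )-y(\mathbf{x})|\le M\|\mathbf{x}^*-\mathbf{x}\|_\infty^\alpha$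 for all $\mathbf{x}\in[0,1]^d$.
   Context: $\|\mathbf{x}\|_\infty=\max_l|x_l|$. The condition $M/(2^{4\beta+1}\tilde M)\ge1$ is a standing requirement imposed by the paper on the constants in this construction. *)

theory Defs
  imports "HOL-Analysis.Analysis"
begin

definition supnorm :: "real ^ 'd \<Rightarrow> real" where
  "supnorm x = Max (range (\<lambda>l. \<bar>x $ l\<bar>))"

definition unit_cube :: "(real ^ 'd) set" where
  "unit_cube = {x. \<forall>l. 0 \<le> x $ l \<and> x $ l \<le> 1}"

definition yfun :: "real \<Rightarrow> real \<Rightarrow> real \<Rightarrow> real \<Rightarrow> real \<Rightarrow> real \<Rightarrow> real ^ 'd \<Rightarrow> real ^ 'd \<Rightarrow> real ^ 'd \<Rightarrow> real" where
  "yfun \<alpha> \<beta> M Mt \<rho> \<zeta> c0 c x =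
     (if supnorm (x - c) \<le> \<zeta> then M / 2 * \<zeta> powr \<alpha> - M / 2 * supnorm (x - c) powr \<alpha>
      else if supnorm (x - c0) \<le> \<rho> * \<zeta> powr (\<alpha> / \<beta>) then 0
      else 2 powr \<beta> * Mt * \<rho> powr \<beta> * \<zeta> powr \<alpha> - 2 powr \<beta> * Mt * supnorm (x - c0) powr \<beta>)"

end

theory Submission
  imports Defs
begin

text \<open>
  The bump y depends on x only through r = |x - c| and s = |x - c0|, and the hypothesis on
  c - c0 gives |r - s| \<le> \<rho> \<zeta>^(\<alpha>/\<beta>) - \<zeta>. The gap y(c) - y(x) is then estimated on
  each of the three pieces of y separately: on the inner cap it is (M/2) r^\<alpha>; on the flat
  plateau it is (M/2) \<zeta>^\<alpha> with r at most twice the plateau radius; on the outer slope the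
  choice of \<rho> makes the two slopes match up to powers of 2, and r \<le> 2 s and
  s \<le> 2 \<rho> r^(\<alpha>/\<beta>) yield the two bounds.
\<close>

lemma supnorm_eq_infnorm: "supnorm x = infnorm (x :: real ^ 'd)"
  unfolding supnorm_def infnorm_cart by (simp add: cSup_eq_Max full_SetCompr_eq)

lemma supnorm_le_iff: "supnorm (x :: real ^ 'd) \<le> B \<longleftrightarrow> (\<forall>l. \<bar>x $ l\<bar> \<le> B)"
  unfolding supnorm_def by (subst Max_le_iff) auto

lemma supnorm_diff_le_1:
  assumes "x \<in> unit_cube" "y \<in> unit_cube"
  shows "supnorm (x - y :: real ^ 'd) \<le> 1"
proof -
  have "\<bar>x $ l - y $ l\<bar> \<le> 1" for l
    using assms unfolding unit_cube_def by (smt (verit) mem_Collect_eq)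
  then show ?thesis by (simp add: supnorm_le_iff)
qed

locale bump_constants =
  fixes \<alpha> \<beta> M Mt \<rho> \<zeta> :: real
  assumes alpha_pos: "0 < \<alpha>" and alpha_le_beta: "\<alpha> \<le> \<beta>" and Mt_pos: "0 < Mt"
    and rho_ge_1: "1 \<le> \<rho>"
    and rho_powr_beta: "\<rho> powr \<beta> = M / (2 powr (2 * \<beta> + 1) * Mt)"
    and zeta_pos: "0 < \<zeta>"
begin

definition radius :: real where
  "radius = \<rho> * \<zeta> powr (\<alpha> / \<beta>)"

definition profile :: "real \<Rightarrow> real \<Rightarrow> real" where
  "profile r s =
     (if r \<le> \<zeta> then M / 2 * \<zeta> powr \<alpha> - M / 2 * r powr \<alpha>
      else if s \<le> radius then 0
      else 2 powr \<beta> * Mt * \<rho> powr \<beta> * \<zeta> powr \<alpha> - 2 powr \<beta> * Mt * s powr \<beta>)"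

lemma beta_pos: "0 < \<beta>"
  using alpha_pos alpha_le_beta by linarith

lemma radius_nonneg: "0 \<le> radius"
  using rho_ge_1 by (simp add: radius_def)

lemma radius_powr_beta: "radius powr \<beta> = \<rho> powr \<beta> * \<zeta> powr \<alpha>"
  using rho_ge_1 zeta_pos beta_pos by (simp add: radius_def powr_mult powr_powr)

lemma slopes_match: "2 powr \<beta> * 2 powr \<beta> * Mt * \<rho> powr \<beta> = M / 2"
proof -
  have "2 powr (2 * \<beta> + 1) = 2 powr \<beta> * 2 powr \<beta> * (2 :: real)"
    using powr_add[of 2 \<beta> \<beta>] powr_add[of 2 "2 * \<beta>" 1] by simp
  then show ?thesis
    using Mt_pos by (simp add: rho_powr_beta field_simps)
qed

lemma outer_coeff_le_half_M: "2 powr \<beta> * Mt * \<rho> powr \<beta> \<le> M / 2"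
proof -
  have "1 \<le> (2 :: real) powr \<beta>"
    using beta_pos by (simp add: ge_one_powr_ge_zero)
  moreover have "0 \<le> 2 powr \<beta> * Mt * \<rho> powr \<beta>"
    using Mt_pos by simp
  ultimately show ?thesis
    using slopes_match by (metis mult.assoc mult_le_cancel_right1 not_le)
qed

lemma Mt_le_half_M: "Mt \<le> M / 2"
proof -
  have "1 \<le> (2 :: real) powr \<beta>" "1 \<le> \<rho> powr \<beta>"
    using beta_pos rho_ge_1 by (simp_all add: ge_one_powr_ge_zero)
  then have "1 \<le> (2 :: real) powr \<beta> * \<rho> powr \<beta>"
    using mult_mono[of 1 "2 powr \<beta>" 1 "\<rho> powr \<beta>"] by simp
  then have "Mt \<le> 2 powr \<beta> * Mt * \<rho> powr \<beta>"
    using Mt_pos by (simp add: mult.commute mult.left_commute)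
  then show ?thesis
    using outer_coeff_le_half_M by linarith
qed

lemma M_pos: "0 < M"
  using Mt_pos Mt_le_half_M by linarith

lemma gap_bounds_inner:
  assumes "0 \<le> r" "r \<le> 1" "r \<le> \<zeta>"
  shows "Mt * r powr \<beta> \<le> M / 2 * \<zeta> powr \<alpha> - profile r s"
    and "M / 2 * \<zeta> powr \<alpha> - profile r s \<le> M * r powr \<alpha>"
proof -
  have gap: "M / 2 * \<zeta> powr \<alpha> - profile r s = M / 2 * r powr \<alpha>"
    using assms(3) by (simp add: profile_def)
  have "Mt * r powr \<beta> \<le> M / 2 * r powr \<alpha>"
    using Mt_le_half_M Mt_pos powr_mono'[OF alpha_le_beta assms(1,2)] by (intro mult_mono) auto
  then show "Mt * r powr \<beta> \<le> M / 2 * \<zeta> powr \<alpha> - profile r s"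
    unfolding gap .
  show "M / 2 * \<zeta> powr \<alpha> - profile r s \<le> M * r powr \<alpha>"
    unfolding gap using M_pos by simp
qed

lemma gap_bounds_plateau:
  assumes "\<zeta> < r" "s \<le> radius" "r \<le> s + radius"
  shows "Mt * r powr \<beta> \<le> M / 2 * \<zeta> powr \<alpha> - profile r s"
    and "M / 2 * \<zeta> powr \<alpha> - profile r s \<le> M * r powr \<alpha>"
proof -
  have gap: "M / 2 * \<zeta> powr \<alpha> - profile r s = M / 2 * \<zeta> powr \<alpha>"
    using assms(1,2) by (simp add: profile_def)
  have "r powr \<beta> \<le> (2 * radius) powr \<beta>"
    using assms zeta_pos beta_pos by (intro powr_mono2) auto
  also have "\<dots> = 2 powr \<beta> * \<rho> powr \<beta> * \<zeta> powr \<alpha>"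
    using radius_nonneg by (simp add: powr_mult radius_powr_beta)
  finally have "Mt * r powr \<beta> \<le> (2 powr \<beta> * Mt * \<rho> powr \<beta>) * \<zeta> powr \<alpha>"
    using Mt_pos by (simp add: mult_left_mono mult_ac)
  also have "\<dots> \<le> M / 2 * \<zeta> powr \<alpha>"
    using outer_coeff_le_half_M by (intro mult_right_mono) auto
  finally show "Mt * r powr \<beta> \<le> M / 2 * \<zeta> powr \<alpha> - profile r s"
    unfolding gap .
  have "\<zeta> powr \<alpha> \<le> r powr \<alpha>"
    using assms(1) zeta_pos alpha_pos by (intro powr_mono2) auto
  then have "M / 2 * \<zeta> powr \<alpha> \<le> M / 2 * r powr \<alpha>"
    using M_pos by simp
  moreover have "0 \<le> M / 2 * r powr \<alpha>"
    using M_pos by simp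
  ultimately show "M / 2 * \<zeta> powr \<alpha> - profile r s \<le> M * r powr \<alpha>"
    unfolding gap by linarith
qed

lemma gap_bounds_outer:
  assumes "\<zeta> < r" "r \<le> 1" "radius < s" "\<bar>r - s\<bar> \<le> radius - \<zeta>"
  shows "Mt * r powr \<beta> \<le> M / 2 * \<zeta> powr \<alpha> - profile r s"
    and "M / 2 * \<zeta> powr \<alpha> - profile r s \<le> M * r powr \<alpha>"
proof -
  define K where "K = 2 powr \<beta> * Mt"
  have gap: "M / 2 * \<zeta> powr \<alpha> - profile r s
      = (M / 2 - K * \<rho> powr \<beta>) * \<zeta> powr \<alpha> + K * s powr \<beta>"
    using assms(1,3) by (simp add: profile_def K_def algebra_simps)
  have plateau_part: "0 \<le> (M / 2 - K * \<rho> powr \<beta>) * \<zeta> powr \<alpha>"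
    using outer_coeff_le_half_M by (simp add: K_def)
  have "r \<le> 2 * s"
    using assms zeta_pos by linarith
  then have "r powr \<beta> \<le> 2 powr \<beta> * s powr \<beta>"
    using assms zeta_pos beta_pos radius_nonneg powr_mono2[of \<beta> r "2 * s"]
    by (simp add: powr_mult)
  then have slope_lower: "Mt * r powr \<beta> \<le> K * s powr \<beta>"
    using Mt_pos by (simp add: K_def mult_left_mono mult_ac)
  have zeta_le: "\<zeta> powr (\<alpha> / \<beta>) \<le> r powr (\<alpha> / \<beta>)"
    using assms(1) zeta_pos alpha_pos beta_pos by (intro powr_mono2) auto
  have "r powr 1 \<le> r powr (\<alpha> / \<beta>)"
    using assms(1,2) zeta_pos alpha_pos alpha_le_beta beta_pos by (intro powr_mono') auto
  then have "r \<le> r powr (\<alpha> / \<beta>)"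
    using assms(1) zeta_pos by simp
  moreover have "radius \<le> \<rho> * r powr (\<alpha> / \<beta>)"
    using zeta_le rho_ge_1 by (simp add: radius_def)
  ultimately have "s \<le> r powr (\<alpha> / \<beta>) + \<rho> * r powr (\<alpha> / \<beta>)"
    using assms(4) zeta_pos by linarith
  also have "\<dots> \<le> 2 * \<rho> * r powr (\<alpha> / \<beta>)"
    using mult_right_mono[OF rho_ge_1, of "r powr (\<alpha> / \<beta>)"] by simp
  finally have "s powr \<beta> \<le> (2 * \<rho> * r powr (\<alpha> / \<beta>)) powr \<beta>"
    using assms(3) radius_nonneg beta_pos by (intro powr_mono2) auto
  also have "\<dots> = 2 powr \<beta> * \<rho> powr \<beta> * r powr \<alpha>"
    using rho_ge_1 beta_pos assms(1) zeta_pos by (simp add: powr_mult powr_powr)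
  finally have "K * s powr \<beta> \<le> K * (2 powr \<beta> * \<rho> powr \<beta> * r powr \<alpha>)"
    using Mt_pos by (simp add: K_def mult_left_mono)
  also have "\<dots> = M / 2 * r powr \<alpha>"
    using slopes_match by (simp add: K_def mult_ac)
  finally have slope_upper: "K * s powr \<beta> \<le> M / 2 * r powr \<alpha>" .
  have "\<zeta> powr \<alpha> \<le> r powr \<alpha>"
    using assms(1) zeta_pos alpha_pos by (intro powr_mono2) auto
  then have "M / 2 * \<zeta> powr \<alpha> \<le> M / 2 * r powr \<alpha>"
    using M_pos by simp
  moreover have "0 \<le> K * \<rho> powr \<beta> * \<zeta> powr \<alpha>"
    using Mt_pos by (simp add: K_def)
  ultimately show "M / 2 * \<zeta> powr \<alpha> - profile r s \<le> M * r powr \<alpha>"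
    unfolding gap using slope_upper by (simp add: algebra_simps)
  show "Mt * r powr \<beta> \<le> M / 2 * \<zeta> powr \<alpha> - profile r s"
    unfolding gap using plateau_part slope_lower by linarith
qed

lemma profile_gap_bounds:
  assumes "0 \<le> r" "r \<le> 1" "\<bar>r - s\<bar> \<le> radius - \<zeta>"
  shows "Mt * r powr \<beta> \<le> M / 2 * \<zeta> powr \<alpha> - profile r s
    \<and> M / 2 * \<zeta> powr \<alpha> - profile r s \<le> M * r powr \<alpha>"
proof (cases "r \<le> \<zeta>")
  case True
  then show ?thesis
    using gap_bounds_inner assms by blast
next
  case False
  have "r \<le> s + radius"
    using assms(3) zeta_pos by (simp add: abs_le_iff)
  then show ?thesis
    using gap_bounds_plateau[of r s] gap_bounds_outer[of r s] assms False
    by (cases "s \<le> radius") auto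
qed

lemma yfun_eq_profile:
  "yfun \<alpha> \<beta> M Mt \<rho> \<zeta> c0 c x = profile (supnorm (x - c)) (supnorm (x - c0))"
  by (simp add: yfun_def profile_def radius_def)

lemma yfun_gap_bounds:
  fixes c0 c x :: "real ^ 'd"
  assumes "x \<in> unit_cube" "c \<in> unit_cube" "supnorm (c - c0) \<le> radius - \<zeta>"
  shows "Mt * supnorm (c - x) powr \<beta>
      \<le> yfun \<alpha> \<beta> M Mt \<rho> \<zeta> c0 c c - yfun \<alpha> \<beta> M Mt \<rho> \<zeta> c0 c x
    \<and> yfun \<alpha> \<beta> M Mt \<rho> \<zeta> c0 c c - yfun \<alpha> \<beta> M Mt \<rho> \<zeta> c0 c x
      \<le> M * supnorm (c - x) powr \<alpha>"
proof -
  have "yfun \<alpha> \<beta> M Mt \<rho> \<zeta> c0 c c = M / 2 * \<zeta> powr \<alpha>"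
    using zeta_pos by (simp add: yfun_eq_profile profile_def supnorm_eq_infnorm infnorm_0)
  moreover have "\<bar>supnorm (x - c) - supnorm (x - c0)\<bar> \<le> supnorm (c - c0)"
    using absdiff_infnorm[of "x - c" "x - c0"] by (simp add: supnorm_eq_infnorm infnorm_sub)
  moreover have "supnorm (c - x) = supnorm (x - c)"
    by (simp add: supnorm_eq_infnorm infnorm_sub)
  ultimately show ?thesis
    using profile_gap_bounds[of "supnorm (x - c)" "supnorm (x - c0)"] assms
      supnorm_diff_le_1[OF assms(1,2)] infnorm_pos_le[of "x - c"]
    by (simp add: yfun_eq_profile supnorm_eq_infnorm)
qed

end

lemma bump_constantsI:
  assumes "0 < \<alpha>" "\<alpha> \<le> \<beta>" "0 < M" "0 < Mt"
    and "M / (2 powr (4 * \<beta> + 1) * Mt) \<ge> 1"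
    and "\<rho> = (M / (2 powr (2 * \<beta> + 1) * Mt)) powr (1 / \<beta>)"
    and "0 < \<zeta>"
  shows "bump_constants \<alpha> \<beta> M Mt \<rho> \<zeta>"
proof -
  have "(2 :: real) powr (2 * \<beta> + 1) \<le> 2 powr (4 * \<beta> + 1)"
    using assms(1,2) by (intro powr_mono) auto
  then have "M / (2 powr (4 * \<beta> + 1) * Mt) \<le> M / (2 powr (2 * \<beta> + 1) * Mt)"
    using assms(3,4) by (intro divide_left_mono mult_right_mono) auto
  then have "1 \<le> M / (2 powr (2 * \<beta> + 1) * Mt)"
    using assms(5) by linarith
  moreover have "0 < \<beta>"
    using assms(1,2) by linarith
  ultimately show ?thesis
    using assms by unfold_locales (simp_all add: ge_one_powr_ge_zero powr_powr)
qed

theorem lemma4: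
  fixes \<alpha> \<beta> M Mt \<rho> \<zeta> :: real and c0 c :: "real ^ 'd"
  assumes "0 < \<alpha>" "\<alpha> \<le> \<beta>" "0 < M" "0 < Mt"
    and "M / (2 powr (4 * \<beta> + 1) * Mt) \<ge> 1"
    and "\<rho> = (M / (2 powr (2 * \<beta> + 1) * Mt)) powr (1 / \<beta>)"
    and "0 < \<zeta>" "\<zeta> \<le> 1"
    and "{x. supnorm (x - c0) \<le> \<rho> * \<zeta> powr (\<alpha> / \<beta>)} \<subseteq> unit_cube"
    and "supnorm (c - c0) \<le> \<rho> * \<zeta> powr (\<alpha> / \<beta>) - \<zeta>"
  shows "c \<in> unit_cube
    \<and> (\<forall>x\<in>unit_cube. x \<noteq> c \<longrightarrow> yfun \<alpha> \<beta> M Mt \<rho> \<zeta> c0 c x < yfun \<alpha> \<beta> M Mt \<rho> \<zeta> c0 c c)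
    \<and> (\<forall>x\<in>unit_cube.
         Mt * supnorm (c - x) powr \<beta> \<le> \<bar>yfun \<alpha> \<beta> M Mt \<rho> \<zeta> c0 c c - yfun \<alpha> \<beta> M Mt \<rho> \<zeta> c0 c x\<bar>
       \<and> \<bar>yfun \<alpha> \<beta> M Mt \<rho> \<zeta> c0 c c - yfun \<alpha> \<beta> M Mt \<rho> \<zeta> c0 c x\<bar> \<le> M * supnorm (c - x) powr \<alpha>)"
proof -
  interpret bump_constants \<alpha> \<beta> M Mt \<rho> \<zeta>
    using assms(1-7) by (rule bump_constantsI)
  let ?y = "yfun \<alpha> \<beta> M Mt \<rho> \<zeta> c0 c"
  have c_in_cube: "c \<in> unit_cube"
    using assms(9,10) zeta_pos by auto
  have gap: "Mt * supnorm (c - x) powr \<beta> \<le> ?y c - ?y x \<and> ?y c - ?y x \<le> M * supnorm (c - x) powr \<alpha>"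
    if "x \<in> unit_cube" for x
    using yfun_gap_bounds[OF that c_in_cube] assms(10) by (simp add: radius_def)
  have "0 < Mt * supnorm (c - x) powr \<beta>" if "x \<noteq> c" for x
    using that Mt_pos by (simp add: supnorm_eq_infnorm infnorm_eq_0)
  moreover have "0 \<le> Mt * supnorm (c - x) powr \<beta>" for x
    using Mt_pos by simp
  ultimately show ?thesis
    using c_in_cube gap by (smt (verit))
qed

end
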